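(* Let $\Phi$ be an automorphism of $\Theta^0(\mathcal V)$ satisfying both of the following: (1) $\Phi(A)=A$ for every object $A$; (2) $s_A(x)=x$ for every object $A$ and every $x\in X_A$. Let $\omega$ be a basic operation symbol of arity $k\ge1$. Let $A$ be an object with basis $X_A=\{x_1,\dots,x_n\}$, where $n\ge k$. Put $\tilde w=s_A(\omega_A(x_1,\dots,x_k))\in A$. For each object $B$ and $b_1,\dots,b_k\in B$, define $$\tilde\omega_B(b_1,\dots,b_k)=\nu(\tilde w),$$ where $\nu:A\to B$ is the homomorphism with $\nu(x_i)=b_i$ for $i\le k$ and $\nu(x_i)=b_k$ for $k<i\le n$. Thus $\tilde\omega_B$ is the term (polynomial) operation on $B$ given by the term $\tilde w$. Then for every object $B$ and all $b_1,\dots,b_k\in B$, $$s_B(\omega_B(b_1,\dots,b_k))=\tilde\omega_B(s_B(b_1),\dots,s_B(b_k)).$$ That is, $s_B$ is an isomorphism of $B$ onto the algebra on the same set whose basic operations are the term operations $\tilde\omega_B$.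
   Context: $\mathcal V$ is a variety of universal algebras, and $X_0$ is a fixed infinite set. $\Theta^0(\mathcal V)$ is the full subcategory of the category of $\mathcal V$-algebras whose objects are the free $\mathcal V$-algebras on finite subsets of $X_0$. Each object $A$ has a designated basis $X_A\subseteq X_0$. Among the objects is the free algebra $A_0$ on a single $x_0\in X_0$. For an object $A$ and $a\in A$, $\alpha^A_a:A_0\to A$ is the homomorphism with $x_0\mapsto a$. For an automorphism $\Phi$ fixing $A_0$, the main function is $s_A(a)=\Phi(\alpha^A_a)(x_0)$. Each $s_A$ is a bijection, and $\Phi(\mu)=s_B\circ\mu\circ s_A^{-1}$ for every morphism $\mu:A\to B$. For an operation symbol $\omega$, $\omega_A$ denotes the corresponding operation of $A$. *)

theory Defs
  imports Main "HOL-Library.FuncSet"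
begin

text \<open>Terms over operation symbols of type 'f (with arity function ar) and
variables of type 'x (the type 'x plays the role of the set X0).\<close>

datatype ('f, 'x) trm = Var 'x | Fn 'f "('f, 'x) trm list"

fun wf_trm :: "('f \<Rightarrow> nat) \<Rightarrow> ('f, 'x) trm \<Rightarrow> bool" where
  "wf_trm ar (Var x) = True"
| "wf_trm ar (Fn f ts) = (length ts = ar f \<and> (\<forall>t\<in>set ts. wf_trm ar t))"

fun vars :: "('f, 'x) trm \<Rightarrow> 'x set" where
  "vars (Var x) = {x}"
| "vars (Fn f ts) = \<Union> (vars ` set ts)"

fun subst :: "('x \<Rightarrow> ('f, 'x) trm) \<Rightarrow> ('f, 'x) trm \<Rightarrow> ('f, 'x) trm" where
  "subst \<sigma> (Var x) = \<sigma> x"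
| "subst \<sigma> (Fn f ts) = Fn f (map (subst \<sigma>) ts)"

text \<open>The variety V is given by a set E of identities. deriv ar E is
equational derivability from E (the fully invariant congruence generated by E
on well-formed terms); by Birkhoff's theorem it coincides with validity in V.\<close>

inductive deriv :: "('f \<Rightarrow> nat) \<Rightarrow> (('f, 'x) trm \<times> ('f, 'x) trm) set
    \<Rightarrow> ('f, 'x) trm \<Rightarrow> ('f, 'x) trm \<Rightarrow> bool"
  for ar E where
  drefl: "wf_trm ar t \<Longrightarrow> deriv ar E t t"
| dsym: "deriv ar E t u \<Longrightarrow> deriv ar E u t"
| dtrans: "deriv ar E t u \<Longrightarrow> deriv ar E u v \<Longrightarrow> deriv ar E t v"
| dcong: "length ts = ar f \<Longrightarrow> list_all2 (deriv ar E) ts us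
           \<Longrightarrow> deriv ar E (Fn f ts) (Fn f us)"
| dax: "(l, r) \<in> E \<Longrightarrow> (\<forall>x. wf_trm ar (\<sigma> x))
           \<Longrightarrow> deriv ar E (subst \<sigma> l) (subst \<sigma> r)"
monos list_all2_mono

text \<open>Elements of free V-algebras: equivalence classes of terms.\<close>

definition cls :: "('f \<Rightarrow> nat) \<Rightarrow> (('f, 'x) trm \<times> ('f, 'x) trm) set
    \<Rightarrow> ('f, 'x) trm \<Rightarrow> ('f, 'x) trm set" where
  "cls ar E t = {u. deriv ar E t u}"

definition fcarrier :: "('f \<Rightarrow> nat) \<Rightarrow> (('f, 'x) trm \<times> ('f, 'x) trm) set
    \<Rightarrow> 'x set \<Rightarrow> ('f, 'x) trm set set" where
  "fcarrier ar E X = {cls ar E t | t. wf_trm ar t \<and> vars t \<subseteq> X}"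

text \<open>The basic operation omega_A (independent of the algebra A).\<close>

definition opr :: "('f \<Rightarrow> nat) \<Rightarrow> (('f, 'x) trm \<times> ('f, 'x) trm) set
    \<Rightarrow> 'f \<Rightarrow> ('f, 'x) trm set list \<Rightarrow> ('f, 'x) trm set" where
  "opr ar E f cs = cls ar E (Fn f (map (\<lambda>c. SOME t. t \<in> c) cs))"

definition fhom :: "('f \<Rightarrow> nat) \<Rightarrow> (('f, 'x) trm \<times> ('f, 'x) trm) set
    \<Rightarrow> 'x set \<Rightarrow> 'x set \<Rightarrow> (('f, 'x) trm set \<Rightarrow> ('f, 'x) trm set) set" where
  "fhom ar E X Y = {h. h \<in> fcarrier ar E X \<rightarrow>\<^sub>E fcarrier ar E Y \<and>
     (\<forall>f cs. length cs = ar f \<longrightarrow> set cs \<subseteq> fcarrier ar E X \<longrightarrow>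
        h (opr ar E f cs) = opr ar E f (map h cs))}"

text \<open>An automorphism of the category Theta^0(V): object map Fo (bijective on the
objects, i.e. finite subsets of X0) and morphism map Phi A B on hom(A,B), which is
functorial and bijective on each hom-set.\<close>

definition is_automorphism :: "('f \<Rightarrow> nat) \<Rightarrow> (('f, 'x) trm \<times> ('f, 'x) trm) set
    \<Rightarrow> ('x set \<Rightarrow> 'x set)
    \<Rightarrow> ('x set \<Rightarrow> 'x set \<Rightarrow> (('f, 'x) trm set \<Rightarrow> ('f, 'x) trm set)
                        \<Rightarrow> (('f, 'x) trm set \<Rightarrow> ('f, 'x) trm set)) \<Rightarrow> bool" where
  "is_automorphism ar E Fo Phi \<longleftrightarrow>
     bij_betw Fo {X. finite X} {X. finite X} \<and>
     (\<forall>A B. finite A \<longrightarrow> finite B \<longrightarrow>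
        bij_betw (Phi A B) (fhom ar E A B) (fhom ar E (Fo A) (Fo B))) \<and>
     (\<forall>A B C g h. finite A \<longrightarrow> finite B \<longrightarrow> finite C \<longrightarrow>
        h \<in> fhom ar E A B \<longrightarrow> g \<in> fhom ar E B C \<longrightarrow>
        Phi A C (compose (fcarrier ar E A) g h)
          = compose (fcarrier ar E (Fo A)) (Phi B C g) (Phi A B h)) \<and>
     (\<forall>A. finite A \<longrightarrow>
        Phi A A (restrict id (fcarrier ar E A)) = restrict id (fcarrier ar E (Fo A)))"

definition alpha :: "('f \<Rightarrow> nat) \<Rightarrow> (('f, 'x) trm \<times> ('f, 'x) trm) set \<Rightarrow> 'x
    \<Rightarrow> 'x set \<Rightarrow> ('f, 'x) trm set \<Rightarrow> (('f, 'x) trm set \<Rightarrow> ('f, 'x) trm set)" where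
  "alpha ar E x0 A a = (THE h. h \<in> fhom ar E {x0} A \<and> h (cls ar E (Var x0)) = a)"

definition mainfun :: "('f \<Rightarrow> nat) \<Rightarrow> (('f, 'x) trm \<times> ('f, 'x) trm) set
    \<Rightarrow> ('x set \<Rightarrow> 'x set \<Rightarrow> (('f, 'x) trm set \<Rightarrow> ('f, 'x) trm set)
                        \<Rightarrow> (('f, 'x) trm set \<Rightarrow> ('f, 'x) trm set))
    \<Rightarrow> 'x \<Rightarrow> 'x set \<Rightarrow> ('f, 'x) trm set \<Rightarrow> ('f, 'x) trm set" where
  "mainfun ar E Phi x0 A a = Phi {x0} A (alpha ar E x0 A a) (cls ar E (Var x0))"

end

theory Submission
  imports Defs
begin

text \<open>The main function is natural: \<open>s_B \<circ> \<mu> = \<Phi>(\<mu>) \<circ> s_A\<close> for every homomorphism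
\<open>\<mu> : A \<rightarrow> B\<close>, because \<open>\<alpha>^B_(\<mu> a) = \<mu> \<circ> \<alpha>^A_a\<close> and \<open>\<Phi>\<close> is a functor fixing \<open>A_0\<close>.
Take \<open>\<mu>\<close> with \<open>\<mu>(x_i) = b_min(i,k)\<close>. Since \<open>s_A\<close> fixes the basis of \<open>A\<close>, naturality
gives \<open>\<Phi>(\<mu>)(x_i) = s_B(b_min(i,k)) = \<nu>(x_i)\<close>, hence \<open>\<Phi>(\<mu>) = \<nu>\<close>. As \<open>\<mu>\<close> maps
\<open>\<omega>_A(x_1,\<dots>,x_k)\<close> to \<open>\<omega>_B(b_1,\<dots>,b_k)\<close>, naturality at this element is the claim.\<close>

lemma wf_subst: "wf_trm ar t \<Longrightarrow> \<forall>x. wf_trm ar (\<sigma> x) \<Longrightarrow> wf_trm ar (subst \<sigma> t)"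
  by (induction t) auto

lemma subst_subst: "subst \<sigma> (subst \<tau> t) = subst (\<lambda>x. subst \<sigma> (\<tau> x)) t"
  by (induction t) auto

lemma vars_subst: "vars (subst \<sigma> t) = (\<Union>x\<in>vars t. vars (\<sigma> x))"
  by (induction t) auto

lemma deriv_subst:
  "deriv ar E t u \<Longrightarrow> \<forall>x. wf_trm ar (\<sigma> x) \<Longrightarrow> deriv ar E (subst \<sigma> t) (subst \<sigma> u)"
proof (induction rule: deriv.induct)
  case (drefl t)
  then show ?case by (simp add: deriv.drefl wf_subst)
next
  case (dsym t u)
  then show ?case by (simp add: deriv.dsym)
next
  case (dtrans t u v)
  then show ?case by (meson deriv.dtrans)
next
  case (dcong ts f us)
  then show ?case
    by (auto intro!: deriv.dcong simp: list_all2_map1 list_all2_map2 elim: list_all2_mono)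
next
  case (dax l r \<tau>)
  then show ?case by (simp add: subst_subst deriv.dax wf_subst)
qed

lemma cls_self: "wf_trm ar t \<Longrightarrow> t \<in> cls ar E t"
  by (simp add: cls_def deriv.drefl)

lemma cls_eq: "deriv ar E t u \<Longrightarrow> cls ar E t = cls ar E u"
  unfolding cls_def by (auto intro: deriv.dtrans deriv.dsym)

lemma cls_eqD: "wf_trm ar t \<Longrightarrow> cls ar E t = cls ar E u \<Longrightarrow> deriv ar E t u"
  using cls_self[of ar t E] unfolding cls_def by (auto intro: deriv.dsym)

lemma cls_in_fcarrier: "wf_trm ar t \<Longrightarrow> vars t \<subseteq> X \<Longrightarrow> cls ar E t \<in> fcarrier ar E X"
  unfolding fcarrier_def by blast

lemma opr_cls:
  assumes "\<forall>t\<in>set ts. wf_trm ar t" "length ts = ar f"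
  shows "opr ar E f (map (cls ar E) ts) = cls ar E (Fn f ts)"
proof -
  have "deriv ar E t (SOME u. u \<in> cls ar E t)" if "t \<in> set ts" for t
  proof -
    have "t \<in> cls ar E t" using assms(1) that by (simp add: cls_self)
    then have "(SOME u. u \<in> cls ar E t) \<in> cls ar E t" by (rule someI)
    then show ?thesis by (simp add: cls_def)
  qed
  then have "deriv ar E (Fn f ts) (Fn f (map (\<lambda>c. SOME u. u \<in> c) (map (cls ar E) ts)))"
    using assms(2) by (auto intro!: deriv.dcong simp: list_all2_conv_all_nth)
  then show ?thesis unfolding opr_def by (simp add: cls_eq)
qed

definition rep :: "('f \<Rightarrow> nat) \<Rightarrow> (('f, 'x) trm \<times> ('f, 'x) trm) set \<Rightarrow> 'x set
    \<Rightarrow> ('f, 'x) trm set \<Rightarrow> ('f, 'x) trm" where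
  "rep ar E X c = (SOME t. wf_trm ar t \<and> vars t \<subseteq> X \<and> c = cls ar E t)"

lemma rep_spec:
  "c \<in> fcarrier ar E X \<Longrightarrow>
     wf_trm ar (rep ar E X c) \<and> vars (rep ar E X c) \<subseteq> X \<and> c = cls ar E (rep ar E X c)"
  unfolding rep_def fcarrier_def by (rule someI_ex) blast

lemma fcarrier_list_cls:
  assumes "set cs \<subseteq> fcarrier ar E X"
  shows "\<exists>ts. cs = map (cls ar E) ts \<and> (\<forall>t\<in>set ts. wf_trm ar t \<and> vars t \<subseteq> X)"
proof (intro exI conjI)
  show "cs = map (cls ar E) (map (rep ar E X) cs)"
    unfolding map_map by (rule map_idI[symmetric]) (use assms rep_spec[of _ ar E X] in auto)
  show "\<forall>t\<in>set (map (rep ar E X) cs). wf_trm ar t \<and> vars t \<subseteq> X"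
    using assms rep_spec[of _ ar E X] by auto
qed

lemma opr_in_fcarrier:
  assumes "set cs \<subseteq> fcarrier ar E X" "length cs = ar f"
  shows "opr ar E f cs \<in> fcarrier ar E X"
proof -
  obtain ts where "cs = map (cls ar E) ts" "\<forall>t\<in>set ts. wf_trm ar t \<and> vars t \<subseteq> X"
    using fcarrier_list_cls[OF assms(1)] by blast
  then show ?thesis
    using assms(2) by (auto simp: opr_cls intro!: cls_in_fcarrier) blast
qed

lemma fhom_opr:
  "h \<in> fhom ar E X Y \<Longrightarrow> length cs = ar f \<Longrightarrow> set cs \<subseteq> fcarrier ar E X
     \<Longrightarrow> h (opr ar E f cs) = opr ar E f (map h cs)"
  unfolding fhom_def by simp

lemma fhom_funcset: "h \<in> fhom ar E X Y \<Longrightarrow> h \<in> fcarrier ar E X \<rightarrow>\<^sub>E fcarrier ar E Y"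
  unfolding fhom_def by simp

lemma fhom_eqI:
  assumes h1: "h1 \<in> fhom ar E X Y" and h2: "h2 \<in> fhom ar E X Y"
    and eq: "\<forall>x\<in>X. h1 (cls ar E (Var x)) = h2 (cls ar E (Var x))"
  shows "h1 = h2"
proof
  fix c
  show "h1 c = h2 c"
  proof (cases "c \<in> fcarrier ar E X")
    case True
    then obtain t where t: "wf_trm ar t" "vars t \<subseteq> X" "c = cls ar E t"
      unfolding fcarrier_def by blast
    have "h1 (cls ar E t) = h2 (cls ar E t)" using t(1,2)
    proof (induction t)
      case (Fn f ts)
      have ts: "length (map (cls ar E) ts) = ar f" "set (map (cls ar E) ts) \<subseteq> fcarrier ar E X"
        using Fn.prems by (auto intro!: cls_in_fcarrier)
      have "h1 (cls ar E (Fn f ts)) = h1 (opr ar E f (map (cls ar E) ts))"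
        using Fn.prems by (simp add: opr_cls)
      also have "\<dots> = opr ar E f (map h1 (map (cls ar E) ts))"
        by (rule fhom_opr[OF h1 ts])
      also have "map h1 (map (cls ar E) ts) = map h2 (map (cls ar E) ts)"
        using Fn by auto
      also have "opr ar E f \<dots> = h2 (opr ar E f (map (cls ar E) ts))"
        by (rule fhom_opr[OF h2 ts, symmetric])
      also have "\<dots> = h2 (cls ar E (Fn f ts))"
        using Fn.prems by (simp add: opr_cls)
      finally show ?case .
    qed (use eq in simp)
    with t show ?thesis by simp
  next
    case False
    then show ?thesis by (simp add: PiE_arb[OF fhom_funcset[OF h1]] PiE_arb[OF fhom_funcset[OF h2]])
  qed
qed

definition subst_hom :: "('f \<Rightarrow> nat) \<Rightarrow> (('f, 'x) trm \<times> ('f, 'x) trm) set \<Rightarrow> 'x set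
    \<Rightarrow> ('x \<Rightarrow> ('f, 'x) trm) \<Rightarrow> ('f, 'x) trm set \<Rightarrow> ('f, 'x) trm set" where
  "subst_hom ar E X \<sigma> = restrict (\<lambda>c. cls ar E (subst \<sigma> (rep ar E X c))) (fcarrier ar E X)"

lemma subst_hom_cls:
  assumes \<sigma>: "\<forall>x. wf_trm ar (\<sigma> x)" and t: "wf_trm ar t" "vars t \<subseteq> X"
  shows "subst_hom ar E X \<sigma> (cls ar E t) = cls ar E (subst \<sigma> t)"
proof -
  have c: "cls ar E t \<in> fcarrier ar E X" using t by (rule cls_in_fcarrier)
  then have "deriv ar E t (rep ar E X (cls ar E t))"
    using t(1) rep_spec cls_eqD by metis
  then have "deriv ar E (subst \<sigma> t) (subst \<sigma> (rep ar E X (cls ar E t)))"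
    using \<sigma> by (rule deriv_subst)
  then show ?thesis using c unfolding subst_hom_def by (simp add: cls_eq)
qed

lemma subst_hom_fhom:
  assumes \<sigma>: "\<forall>x. wf_trm ar (\<sigma> x)" "\<forall>x\<in>X. vars (\<sigma> x) \<subseteq> Y"
  shows "subst_hom ar E X \<sigma> \<in> fhom ar E X Y"
  unfolding fhom_def
proof (intro CollectI conjI allI impI)
  let ?h = "subst_hom ar E X \<sigma>"
  have subst_in: "cls ar E (subst \<sigma> t) \<in> fcarrier ar E Y"
    if "wf_trm ar t" "vars t \<subseteq> X" for t
    using that \<sigma> by (auto simp: wf_subst vars_subst intro!: cls_in_fcarrier) blast
  show "?h \<in> fcarrier ar E X \<rightarrow>\<^sub>E fcarrier ar E Y"
    using subst_in rep_spec by (fastforce simp: subst_hom_def)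
  fix f cs assume len: "length cs = ar f" and cs: "set cs \<subseteq> fcarrier ar E X"
  obtain ts where ts: "cs = map (cls ar E) ts" "\<forall>t\<in>set ts. wf_trm ar t \<and> vars t \<subseteq> X"
    using fcarrier_list_cls[OF cs] by blast
  have Fn: "wf_trm ar (Fn f ts)" "vars (Fn f ts) \<subseteq> X"
    using ts len by auto
  have "?h (opr ar E f cs) = ?h (cls ar E (Fn f ts))"
    using ts len by (simp add: opr_cls)
  also have "\<dots> = cls ar E (Fn f (map (subst \<sigma>) ts))"
    using subst_hom_cls[OF \<sigma>(1) Fn] by simp
  also have "\<dots> = opr ar E f (map (cls ar E) (map (subst \<sigma>) ts))"
    by (rule opr_cls[symmetric]) (use ts len \<sigma>(1) in \<open>auto simp: wf_subst\<close>)
  also have "map (cls ar E) (map (subst \<sigma>) ts) = map ?h cs"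
    using ts \<sigma>(1) by (simp add: subst_hom_cls)
  finally show "?h (opr ar E f cs) = opr ar E f (map ?h cs)" .
qed

lemma fhom_exists:
  assumes "\<forall>x\<in>X. g x \<in> fcarrier ar E Y"
  shows "\<exists>h\<in>fhom ar E X Y. \<forall>x\<in>X. h (cls ar E (Var x)) = g x"
proof -
  define \<sigma> where "\<sigma> x = (if x \<in> X then rep ar E Y (g x) else Var x)" for x
  have \<sigma>: "\<forall>x. wf_trm ar (\<sigma> x)" "\<forall>x\<in>X. vars (\<sigma> x) \<subseteq> Y" "\<forall>x\<in>X. cls ar E (\<sigma> x) = g x"
    using assms rep_spec[of _ ar E Y] by (auto simp: \<sigma>_def)
  have "subst_hom ar E X \<sigma> \<in> fhom ar E X Y"
    using \<sigma>(1,2) by (rule subst_hom_fhom)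
  moreover have "\<forall>x\<in>X. subst_hom ar E X \<sigma> (cls ar E (Var x)) = g x"
    using \<sigma>(3) subst_hom_cls[OF \<sigma>(1), of "Var x" X E for x] by simp
  ultimately show ?thesis by blast
qed

lemma fhom_exists_nth:
  assumes "distinct xs" "length cs = length xs" "set cs \<subseteq> fcarrier ar E Y"
  shows "\<exists>h\<in>fhom ar E (set xs) Y. \<forall>i<length xs. h (cls ar E (Var (xs ! i))) = cs ! i"
proof -
  let ?g = "\<lambda>x. cs ! the (map_of (zip xs [0..<length xs]) x)"
  have idx: "the (map_of (zip xs [0..<length xs]) (xs ! i)) = i" if "i < length xs" for i
    using map_of_zip_nth[of xs "[0..<length xs]" i] assms(1) that by simp
  have "\<forall>x\<in>set xs. ?g x \<in> fcarrier ar E Y"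
  proof
    fix x assume "x \<in> set xs"
    then obtain i where i: "i < length xs" "x = xs ! i" by (auto simp: in_set_conv_nth)
    have "cs ! i \<in> set cs" using i(1) assms(2) by (metis nth_mem)
    with i idx assms(3) show "?g x \<in> fcarrier ar E Y" by auto
  qed
  then have "\<exists>h\<in>fhom ar E (set xs) Y. \<forall>x\<in>set xs. h (cls ar E (Var x)) = ?g x"
    by (rule fhom_exists)
  then obtain h where h: "h \<in> fhom ar E (set xs) Y"
    "\<forall>x\<in>set xs. h (cls ar E (Var x)) = ?g x"
    by blast
  have "\<forall>i<length xs. h (cls ar E (Var (xs ! i))) = cs ! i"
    using h(2) idx by simp
  with h(1) show ?thesis by blast
qed

lemma compose_fhom:
  assumes h: "h \<in> fhom ar E X Y" and g: "g \<in> fhom ar E Y Z"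
  shows "compose (fcarrier ar E X) g h \<in> fhom ar E X Z"
  unfolding fhom_def
proof (intro CollectI conjI allI impI)
  show "compose (fcarrier ar E X) g h \<in> fcarrier ar E X \<rightarrow>\<^sub>E fcarrier ar E Z"
    using fhom_funcset[OF h] fhom_funcset[OF g] by (auto simp: compose_def)
  fix f cs assume len: "length cs = ar f" and cs: "set cs \<subseteq> fcarrier ar E X"
  have hcs: "set (map h cs) \<subseteq> fcarrier ar E Y" "length (map h cs) = ar f"
    using cs len fhom_funcset[OF h] by auto
  have "compose (fcarrier ar E X) g h (opr ar E f cs) = g (h (opr ar E f cs))"
    using opr_in_fcarrier[OF cs len] by (simp add: compose_def)
  also have "\<dots> = opr ar E f (map g (map h cs))"
    using fhom_opr[OF h len cs] fhom_opr[OF g hcs(2,1)] by simp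
  also have "map g (map h cs) = map (compose (fcarrier ar E X) g h) cs"
    using cs by (auto simp: compose_def)
  finally show "compose (fcarrier ar E X) g h (opr ar E f cs)
      = opr ar E f (map (compose (fcarrier ar E X) g h) cs)" .
qed

lemma alpha_eqI:
  assumes "h \<in> fhom ar E {x0} A" "h (cls ar E (Var x0)) = a"
  shows "alpha ar E x0 A a = h"
  unfolding alpha_def
proof (rule the_equality)
  fix h' assume "h' \<in> fhom ar E {x0} A \<and> h' (cls ar E (Var x0)) = a"
  then show "h' = h"
    using assms by (intro fhom_eqI[of h' ar E "{x0}" A h]) auto
qed (use assms in blast)

lemma alpha_fhom:
  assumes "a \<in> fcarrier ar E A"
  shows "alpha ar E x0 A a \<in> fhom ar E {x0} A" "alpha ar E x0 A a (cls ar E (Var x0)) = a"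
proof -
  have "\<exists>h\<in>fhom ar E {x0} A. \<forall>x\<in>{x0}. h (cls ar E (Var x)) = a"
    by (rule fhom_exists) (use assms in simp)
  then obtain h where h: "h \<in> fhom ar E {x0} A" "h (cls ar E (Var x0)) = a"
    by blast
  moreover from h have "alpha ar E x0 A a = h" by (rule alpha_eqI)
  ultimately show "alpha ar E x0 A a \<in> fhom ar E {x0} A"
    "alpha ar E x0 A a (cls ar E (Var x0)) = a" by simp_all
qed

lemma automorphism_fhom:
  assumes "is_automorphism ar E Fo Phi" "finite A" "finite B" "h \<in> fhom ar E A B"
  shows "Phi A B h \<in> fhom ar E (Fo A) (Fo B)"
proof -
  have "bij_betw (Phi A B) (fhom ar E A B) (fhom ar E (Fo A) (Fo B))"
    using assms(1-3) unfolding is_automorphism_def by simp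
  then show ?thesis using assms(4) by (rule bij_betw_apply)
qed

lemma automorphism_compose:
  assumes "is_automorphism ar E Fo Phi" "finite A" "finite B" "finite C"
    and "h \<in> fhom ar E A B" "g \<in> fhom ar E B C"
  shows "Phi A C (compose (fcarrier ar E A) g h)
           = compose (fcarrier ar E (Fo A)) (Phi B C g) (Phi A B h)"
  using assms(1) unfolding is_automorphism_def by (simp add: assms(2-6))

lemma mainfun_naturality:
  assumes aut: "is_automorphism ar E Fo Phi" and A0: "Fo {x0} = {x0}"
    and fin: "finite A" "finite B"
    and \<mu>: "\<mu> \<in> fhom ar E A B" and a: "a \<in> fcarrier ar E A"
  shows "mainfun ar E Phi x0 B (\<mu> a) = Phi A B \<mu> (mainfun ar E Phi x0 A a)"
proof -
  let ?x0 = "cls ar E (Var x0)" and ?\<alpha> = "alpha ar E x0 A a"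
  have x0: "?x0 \<in> fcarrier ar E {x0}" by (rule cls_in_fcarrier) auto
  have "alpha ar E x0 B (\<mu> a) = compose (fcarrier ar E {x0}) \<mu> ?\<alpha>"
    using alpha_fhom[OF a] x0 by (intro alpha_eqI compose_fhom[OF _ \<mu>]) (auto simp: compose_def)
  then have "mainfun ar E Phi x0 B (\<mu> a) = Phi {x0} B (compose (fcarrier ar E {x0}) \<mu> ?\<alpha>) ?x0"
    unfolding mainfun_def by simp
  also have "\<dots> = Phi A B \<mu> (Phi {x0} A ?\<alpha> ?x0)"
    using automorphism_compose[OF aut _ fin alpha_fhom(1)[OF a] \<mu>] A0 x0
    by (simp add: compose_def)
  finally show ?thesis unfolding mainfun_def .
qed

lemma Phi_eqI:
  assumes aut: "is_automorphism ar E Fo Phi" and Fo: "Fo {x0} = {x0}" "Fo A = A" "Fo B = B"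
    and fin: "finite A" "finite B"
    and fix_basis: "\<forall>x\<in>A. mainfun ar E Phi x0 A (cls ar E (Var x)) = cls ar E (Var x)"
    and \<mu>: "\<mu> \<in> fhom ar E A B" and h: "h \<in> fhom ar E A B"
    and h_basis: "\<forall>x\<in>A. h (cls ar E (Var x)) = mainfun ar E Phi x0 B (\<mu> (cls ar E (Var x)))"
  shows "Phi A B \<mu> = h"
proof (rule fhom_eqI)
  show "Phi A B \<mu> \<in> fhom ar E A B"
    using automorphism_fhom[OF aut fin \<mu>] Fo by simp
  show "\<forall>x\<in>A. Phi A B \<mu> (cls ar E (Var x)) = h (cls ar E (Var x))"
    using fix_basis h_basis mainfun_naturality[OF aut Fo(1) fin \<mu>]
    by (simp add: cls_in_fcarrier)
qed fact

theorem mainTheorem6: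
  fixes ar :: "'f \<Rightarrow> nat"
    and E :: "(('f, 'x) trm \<times> ('f, 'x) trm) set"
    and Fo :: "'x set \<Rightarrow> 'x set"
    and Phi :: "'x set \<Rightarrow> 'x set \<Rightarrow> (('f, 'x) trm set \<Rightarrow> ('f, 'x) trm set)
                  \<Rightarrow> (('f, 'x) trm set \<Rightarrow> ('f, 'x) trm set)"
    and x0 :: 'x and \<omega> :: 'f and k n :: nat and xs :: "'x list"
    and B :: "'x set" and bs :: "('f, 'x) trm set list"
    and \<nu> :: "('f, 'x) trm set \<Rightarrow> ('f, 'x) trm set"
  assumes X0_inf: "infinite (UNIV :: 'x set)"
    and E_wf: "\<forall>(l, r) \<in> E. wf_trm ar l \<and> wf_trm ar r"
    and aut: "is_automorphism ar E Fo Phi"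
    and cond1: "\<forall>A. finite A \<longrightarrow> Fo A = A"
    and cond2: "\<forall>A. finite A \<longrightarrow>
                  (\<forall>x\<in>A. mainfun ar E Phi x0 A (cls ar E (Var x)) = cls ar E (Var x))"
    and arity: "ar \<omega> = k" and k_pos: "k \<ge> 1"
    and basis: "distinct xs" "length xs = n" and n_ge: "n \<ge> k"
    and B_obj: "finite B"
    and bs: "length bs = k" "set bs \<subseteq> fcarrier ar E B"
    and \<nu>_hom: "\<nu> \<in> fhom ar E (set xs) B"
    and \<nu>_gen: "\<forall>i<n. \<nu> (cls ar E (Var (xs ! i)))
                        = mainfun ar E Phi x0 B (bs ! min i (k - 1))"
  shows "mainfun ar E Phi x0 B (opr ar E \<omega> bs)
         = \<nu> (mainfun ar E Phi x0 (set xs)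
                (opr ar E \<omega> (map (\<lambda>x. cls ar E (Var x)) (take k xs))))"
proof -
  let ?gens = "map (\<lambda>x. cls ar E (Var x)) (take k xs)"
  have "set (map (\<lambda>i. bs ! min i (k - 1)) [0..<n]) \<subseteq> fcarrier ar E B"
    using bs k_pos by auto
  then have "\<exists>\<mu>\<in>fhom ar E (set xs) B. \<forall>i<length xs.
      \<mu> (cls ar E (Var (xs ! i))) = map (\<lambda>i. bs ! min i (k - 1)) [0..<n] ! i"
    by (intro fhom_exists_nth[OF basis(1)]) (simp_all add: basis(2))
  then obtain \<mu> where \<mu>: "\<mu> \<in> fhom ar E (set xs) B"
    and \<mu>_basis: "\<forall>i<n. \<mu> (cls ar E (Var (xs ! i))) = bs ! min i (k - 1)"
    using basis(2) by auto
  have Phi_\<mu>: "Phi (set xs) B \<mu> = \<nu>"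
  proof (rule Phi_eqI[OF aut _ _ _ _ B_obj _ \<mu> \<nu>_hom])
    show "\<forall>x\<in>set xs. \<nu> (cls ar E (Var x)) = mainfun ar E Phi x0 B (\<mu> (cls ar E (Var x)))"
      using \<nu>_gen \<mu>_basis basis(2) by (auto simp: in_set_conv_nth)
  qed (simp_all add: cond1 cond2 B_obj)
  have gens: "set ?gens \<subseteq> fcarrier ar E (set xs)" "length ?gens = ar \<omega>"
    using arity basis(2) n_ge by (auto intro!: cls_in_fcarrier dest: in_set_takeD)
  have "\<mu> (opr ar E \<omega> ?gens) = opr ar E \<omega> (map \<mu> ?gens)"
    by (rule fhom_opr[OF \<mu> gens(2,1)])
  also have "map \<mu> ?gens = bs"
    using \<mu>_basis bs(1) basis(2) n_ge by (intro nth_equalityI) auto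
  finally show ?thesis
    using mainfun_naturality[OF aut _ _ B_obj \<mu> opr_in_fcarrier[OF gens]] cond1 Phi_\<mu>
    by simp
qed

end
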